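(* Let $K\ge1$, $\alpha\in(0,1]$ and $\gamma\in(0,1]$. For $i\in[K]$ let $F_i$ be an arbitrary nonnegative random variable and $E_i$ a nonnegative random variable such that $\mathbb E[E_i]\le1$ whenever the $i$-th null hypothesis is true; the $F_i$ and $E_i$ may be arbitrarily dependent. For each $i$, draw $T_i$ such that conditionally on all $F_j,E_j$, $T_i\sim\mathrm{Bern}((1-\gamma F_i^{-1})_+)$, and set $\tilde E_i := (1-T_i)F_i + T_i(1-\gamma)E_i$. Let $\mathcal R^{\mathrm{acteBH}}$ be the output of the e-BH procedure at level $\alpha$ applied to $(\tilde E_1,\dots,\tilde E_K)$. Then $\mathrm{FDR}(\mathcal R^{\mathrm{acteBH}})\le\alpha$.
   Context: e-BH at level $\alpha$: with $E_{[i]}$ the $i$-th largest input e-value, $k^{\mathrm{eBH}}=\max\{i\in[K]: E_{[i]}\ge K/(\alpha i)\}$ and the rejection set is $\{i: E_i\ge K/(\alpha k^{\mathrm{eBH}})\}$ (empty if no such $i$). $\mathrm{FDR}(\mathcal R)=\mathbb E\big[|\mathcal N\cap\mathcal R|/(|\mathcal R|\vee1)\big]$ where $\mathcal N$ is the set of true nulls. $x_+=\max(x,0)$; $(1-\gamma F^{-1})_+=0$ when $F=0$. *)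

theory Defs
  imports "HOL-Probability.Probability"
begin

text \<open>Hypotheses are indexed by 0,...,K-1 (i.e. the set {..<K}).\<close>

definition kth_largest :: "nat \<Rightarrow> (nat \<Rightarrow> real) \<Rightarrow> nat \<Rightarrow> real" where
  "kth_largest K e i = rev (sort (map e [0..<K])) ! (i - 1)"

definition ebh_k :: "nat \<Rightarrow> real \<Rightarrow> (nat \<Rightarrow> real) \<Rightarrow> nat" where
  "ebh_k K \<alpha> e = Max ({0} \<union> {i \<in> {1..K}. kth_largest K e i \<ge> real K / (\<alpha> * real i)})"

definition ebh :: "nat \<Rightarrow> real \<Rightarrow> (nat \<Rightarrow> real) \<Rightarrow> nat set" where
  "ebh K \<alpha> e = (if {i \<in> {1..K}. kth_largest K e i \<ge> real K / (\<alpha> * real i)} = {} then {}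
     else {i \<in> {..<K}. e i \<ge> real K / (\<alpha> * real (ebh_k K \<alpha> e))})"

text \<open>(1 - gamma / F)_+ with the convention that it is 0 when F = 0.\<close>
definition bern_prob :: "real \<Rightarrow> real \<Rightarrow> real" where
  "bern_prob \<gamma> f = (if f = 0 then 0 else max (1 - \<gamma> / f) 0)"

definition FE_sigma :: "'a measure \<Rightarrow> nat \<Rightarrow> (nat \<Rightarrow> 'a \<Rightarrow> real) \<Rightarrow> (nat \<Rightarrow> 'a \<Rightarrow> real) \<Rightarrow> 'a measure" where
  "FE_sigma M K F E = sigma (space M)
     ({F j -` B \<inter> space M | j B. j < K \<and> B \<in> sets borel} \<union>
      {E j -` B \<inter> space M | j B. j < K \<and> B \<in> sets borel})"

definition FDP :: "nat set \<Rightarrow> nat set \<Rightarrow> real" where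
  "FDP N R = real (card (N \<inter> R)) / real (max (card R) 1)"

end

theory Submission
  imports Defs
begin

(*
  Conditionally on the sigma-algebra generated by all F_j and E_j, the randomised value
  E'_i = (1 - T_i) F_i + T_i (1 - gamma) E_i has mean p (1 - gamma) E_i + (1 - p) F_i with
  p = (1 - gamma / F_i)_+, and (1 - p) F_i = min F_i gamma. Hence E[E'_i] <= gamma + (1 - gamma) E[E_i] <= 1
  for every null i, i.e. the E'_i are again e-values. The e-BH procedure controls the FDR
  under arbitrary dependence because each rejected index has E'_i >= K / (alpha |R|), so
  FDP is at most alpha / K times the sum of the E'_i over the nulls, whose expectation is at
  most alpha |N| / K.
*)

lemma kth_largest_ge_imp_card_ge:
  assumes "1 \<le> k" "k \<le> K" "t \<le> kth_largest K e k"
  shows "k \<le> card {i \<in> {..<K}. t \<le> e i}"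
proof -
  let ?xs = "map e [0..<K]"
  let ?zs = "sort ?xs"
  have kth: "kth_largest K e k = ?zs ! (K - k)"
    unfolding kth_largest_def using assms by (simp add: rev_nth Suc_diff_Suc)
  have top_k: "{K - k..<K} \<subseteq> {m. m < length ?zs \<and> t \<le> ?zs ! m}"
  proof
    fix m assume m: "m \<in> {K - k..<K}"
    have "?zs ! (K - k) \<le> ?zs ! m"
      by (rule sorted_nth_mono[OF sorted_sort]) (use m in auto)
    then show "m \<in> {m. m < length ?zs \<and> t \<le> ?zs ! m}" using m assms kth by auto
  qed
  have "k = card {K - k..<K}" using assms by simp
  also have "\<dots> \<le> card {m. m < length ?zs \<and> t \<le> ?zs ! m}"
    by (rule card_mono[OF _ top_k]) simp
  also have "\<dots> = length (filter ((\<le>) t) ?zs)" by (simp add: length_filter_conv_card)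
  also have "\<dots> = length (filter ((\<le>) t) ?xs)"
    by (metis mset_filter size_mset mset_sort)
  also have "\<dots> = card {i \<in> {..<K}. t \<le> e i}"
    unfolding length_filter_conv_card by (rule arg_cong[where f = card]) auto
  finally show ?thesis .
qed

lemma ebh_subset: "ebh K \<alpha> e \<subseteq> {..<K}"
  unfolding ebh_def by auto

lemma ebh_k_pos:
  assumes "i \<in> ebh K \<alpha> e"
  shows "0 < ebh_k K \<alpha> e"
proof -
  let ?S = "{i \<in> {1..K}. real K / (\<alpha> * real i) \<le> kth_largest K e i}"
  obtain s where "s \<in> ?S" using assms unfolding ebh_def by (auto split: if_splits)
  then have "1 \<le> s" and "s \<le> Max ({0} \<union> ?S)" by (auto intro: Max_ge)
  then show ?thesis unfolding ebh_k_def by simp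
qed

lemma ebh_threshold_le:
  assumes "i \<in> ebh K \<alpha> e"
  shows "real K / (\<alpha> * real (ebh_k K \<alpha> e)) \<le> e i"
  using assms unfolding ebh_def by (auto split: if_splits)

lemma ebh_k_le_card_ebh: "ebh_k K \<alpha> e \<le> card (ebh K \<alpha> e)"
proof -
  define S where "S = {i \<in> {1..K}. real K / (\<alpha> * real i) \<le> kth_largest K e i}"
  define k where "k = ebh_k K \<alpha> e"
  have k_Max: "k = Max ({0} \<union> S)" unfolding k_def ebh_k_def S_def ..
  show ?thesis
  proof (cases "S = {}")
    case True
    then show ?thesis using k_Max k_def by simp
  next
    case False
    have fin: "finite ({0} \<union> S)" unfolding S_def by simp
    obtain s where s: "s \<in> S" using False by blast
    have "k \<in> {0} \<union> S" unfolding k_Max using fin by (rule Max_in) simp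
    moreover have "s \<le> k" unfolding k_Max using fin s by (intro Max_ge) auto
    moreover have "1 \<le> s" using s unfolding S_def by simp
    ultimately have "k \<in> S" by auto
    then have "k \<le> card {i \<in> {..<K}. real K / (\<alpha> * real k) \<le> e i}"
      unfolding S_def by (intro kth_largest_ge_imp_card_ge) auto
    also have "\<dots> = card (ebh K \<alpha> e)"
      unfolding ebh_def S_def[symmetric] k_def[symmetric] using False by simp
    finally show ?thesis unfolding k_def .
  qed
qed

lemma inverse_card_ebh_le:
  assumes "i \<in> ebh K \<alpha> e" "0 < \<alpha>"
  shows "1 / real (card (ebh K \<alpha> e)) \<le> \<alpha> * e i / real K"
proof -
  let ?k = "ebh_k K \<alpha> e"
  have k: "0 < ?k" using ebh_k_pos[OF assms(1)] .
  have K: "0 < K" using assms(1) ebh_subset by fastforce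
  have "1 / real (card (ebh K \<alpha> e)) \<le> 1 / real ?k"
    using k ebh_k_le_card_ebh[of K \<alpha> e] by (simp add: frac_le)
  also have "\<dots> = \<alpha> * (real K / (\<alpha> * real ?k)) / real K" using assms(2) k K by simp
  also have "\<dots> \<le> \<alpha> * e i / real K"
    using ebh_threshold_le[OF assms(1)] assms(2) by (intro divide_right_mono mult_left_mono) auto
  finally show ?thesis .
qed

lemma FDP_ebh_le:
  assumes "finite N" "0 < \<alpha>" "\<And>i. i \<in> N \<Longrightarrow> 0 \<le> e i"
  shows "FDP N (ebh K \<alpha> e) \<le> (\<Sum>i\<in>N. \<alpha> * e i / real K)"
proof -
  let ?R = "ebh K \<alpha> e"
  have "FDP N ?R \<le> (\<Sum>i\<in>N \<inter> ?R. 1 / real (card ?R))"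
  proof (cases "card ?R = 0")
    case True
    have "finite ?R" using ebh_subset by (rule finite_subset) simp
    with True show ?thesis by (simp add: FDP_def)
  next
    case False
    then have "max (card ?R) 1 = card ?R" by simp
    then show ?thesis by (simp add: FDP_def)
  qed
  also have "\<dots> \<le> (\<Sum>i\<in>N \<inter> ?R. \<alpha> * e i / real K)"
    using inverse_card_ebh_le assms(2) by (intro sum_mono) auto
  also have "\<dots> \<le> (\<Sum>i\<in>N. \<alpha> * e i / real K)"
    using assms by (intro sum_mono2) auto
  finally show ?thesis .
qed

definition is_cond_prob :: "'a measure \<Rightarrow> 'a measure \<Rightarrow> 'a set \<Rightarrow> ('a \<Rightarrow> real) \<Rightarrow> bool" where
  "is_cond_prob M S B q \<longleftrightarrow> (\<forall>A \<in> sets S. measure M (B \<inter> A) = (\<integral>x. indicator A x * q x \<partial>M))"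

lemma nn_integral_indicator_mult_subalgebra:
  assumes sub: "subalgebra M S" and B: "B \<in> sets M" and q: "q \<in> borel_measurable S"
    and cond: "\<And>A. A \<in> sets S \<Longrightarrow> emeasure M (B \<inter> A) = (\<integral>\<^sup>+x. q x * indicator A x \<partial>M)"
    and g: "g \<in> borel_measurable S"
  shows "(\<integral>\<^sup>+x. indicator B x * g x \<partial>M) = (\<integral>\<^sup>+x. q x * g x \<partial>M)"
proof -
  have qM: "q \<in> borel_measurable M" and gM: "g \<in> borel_measurable M"
    using measurable_from_subalg[OF sub] q g by auto
  have sub_density: "subalgebra (density M f) S" for f
    using sub by (simp add: subalgebra_def)
  have "restr_to_subalg (density M (indicator B)) S = restr_to_subalg (density M q) S"
  proof (rule measure_eqI)
    fix A assume "A \<in> sets (restr_to_subalg (density M (indicator B)) S)"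
    then have A: "A \<in> sets S" using sets_restr_to_subalg[OF sub_density] by simp
    then have AM: "A \<in> sets M" using sub by (auto simp: subalgebra_def)
    have "emeasure (density M (indicator B)) A = emeasure M (B \<inter> A)"
      using B AM by (simp add: emeasure_density indicator_inter_arith[symmetric] nn_integral_indicator)
    also have "\<dots> = emeasure (density M q) A"
      using cond[OF A] qM AM by (simp add: emeasure_density)
    finally show "emeasure (restr_to_subalg (density M (indicator B)) S) A
        = emeasure (restr_to_subalg (density M q) S) A"
      using A by (simp add: emeasure_restr_to_subalg[OF sub_density])
  qed (simp add: sets_restr_to_subalg[OF sub_density])
  then have "(\<integral>\<^sup>+x. g x \<partial>density M (indicator B)) = (\<integral>\<^sup>+x. g x \<partial>density M q)"
    using nn_integral_subalgebra2[OF sub_density g] by metis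
  then show ?thesis
    using B qM gM by (simp add: nn_integral_density)
qed

lemma is_cond_prob_imp_emeasure:
  assumes "finite_measure M" "subalgebra M S" "q \<in> borel_measurable S"
    and q_bounds: "\<And>x. x \<in> space M \<Longrightarrow> 0 \<le> q x \<and> q x \<le> 1"
    and "is_cond_prob M S B q" and A: "A \<in> sets S"
  shows "emeasure M (B \<inter> A) = (\<integral>\<^sup>+x. ennreal (q x) * indicator A x \<partial>M)"
proof -
  interpret finite_measure M by fact
  have AM: "A \<in> sets M" using assms(2) A by (auto simp: subalgebra_def)
  have qM: "q \<in> borel_measurable M" using measurable_from_subalg assms(2,3) by blast
  have "integrable M (\<lambda>x. indicator A x * q x)"
    using q_bounds AM qM by (intro integrable_const_bound[where B = 1]) (auto simp: indicator_def)
  moreover have "measure M (B \<inter> A) = (\<integral>x. indicator A x * q x \<partial>M)"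
    using assms(5) A by (simp add: is_cond_prob_def)
  ultimately have "emeasure M (B \<inter> A) = (\<integral>\<^sup>+x. ennreal (indicator A x * q x) \<partial>M)"
    using q_bounds by (simp add: emeasure_eq_measure nn_integral_eq_integral indicator_def)
  also have "\<dots> = (\<integral>\<^sup>+x. ennreal (q x) * indicator A x \<partial>M)"
    by (intro nn_integral_cong) (simp add: indicator_def)
  finally show ?thesis .
qed

lemma nn_integral_indicator_mult_cond_prob:
  assumes "finite_measure M" "subalgebra M S" "B \<in> sets M" "q \<in> borel_measurable S"
    and "\<And>x. x \<in> space M \<Longrightarrow> 0 \<le> q x \<and> q x \<le> 1"
    and "is_cond_prob M S B q" and "g \<in> borel_measurable S"
  shows "(\<integral>\<^sup>+x. indicator B x * g x \<partial>M) = (\<integral>\<^sup>+x. ennreal (q x) * g x \<partial>M)"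
  using assms
  by (intro nn_integral_indicator_mult_subalgebra is_cond_prob_imp_emeasure) auto

lemma is_cond_prob_compl:
  assumes "prob_space M" "subalgebra M S" "B \<in> sets M" "q \<in> borel_measurable S"
    and q_bounds: "\<And>x. x \<in> space M \<Longrightarrow> 0 \<le> q x \<and> q x \<le> 1"
    and "is_cond_prob M S B q"
  shows "is_cond_prob M S (space M - B) (\<lambda>x. 1 - q x)"
  unfolding is_cond_prob_def
proof
  interpret prob_space M by fact
  fix A assume A: "A \<in> sets S"
  then have AM: "A \<in> sets M" using assms(2) by (auto simp: subalgebra_def)
  have qM: "q \<in> borel_measurable M" using measurable_from_subalg assms(2,4) by blast
  have "(space M - B) \<inter> A = A - B \<inter> A" using AM sets.sets_into_space by blast
  then have "measure M ((space M - B) \<inter> A) = measure M A - measure M (B \<inter> A)"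
    using AM assms(3) by (simp add: finite_measure_Diff)
  also have "\<dots> = (\<integral>x. indicator A x \<partial>M) - (\<integral>x. indicator A x * q x \<partial>M)"
    using assms(6) A AM by (simp add: is_cond_prob_def)
  also have "\<dots> = (\<integral>x. indicator A x * (1 - q x) \<partial>M)"
  proof -
    have "integrable M (\<lambda>x. indicator A x * q x)"
      using q_bounds AM qM by (intro integrable_const_bound[where B = 1]) (auto simp: indicator_def)
    moreover have "integrable M (indicator A :: 'a \<Rightarrow> real)" using AM by (simp add: less_top[symmetric])
    ultimately show ?thesis by (simp add: right_diff_distrib)
  qed
  finally show "measure M ((space M - B) \<inter> A) = (\<integral>x. indicator A x * (1 - q x) \<partial>M)" .
qed

lemma bern_prob_nonneg: "0 \<le> bern_prob \<gamma> f"
  unfolding bern_prob_def by simp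

lemma bern_prob_le_one: "0 \<le> \<gamma> \<Longrightarrow> 0 \<le> f \<Longrightarrow> bern_prob \<gamma> f \<le> 1"
  unfolding bern_prob_def by simp

lemma borel_measurable_bern_prob [measurable]: "bern_prob \<gamma> \<in> borel_measurable borel"
  unfolding bern_prob_def by measurable

lemma one_minus_bern_prob_mult:
  assumes "0 \<le> \<gamma>" "0 \<le> f"
  shows "(1 - bern_prob \<gamma> f) * f = min f \<gamma>"
  using assms unfolding bern_prob_def by (auto simp: max_def min_def field_simps)

lemma bern_prob_mixture_le:
  assumes "0 \<le> \<gamma>" "\<gamma> \<le> 1" "0 \<le> f" "0 \<le> e"
  shows "bern_prob \<gamma> f * ((1 - \<gamma>) * e) + (1 - bern_prob \<gamma> f) * f \<le> \<gamma> + (1 - \<gamma>) * e"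
proof -
  have "bern_prob \<gamma> f * ((1 - \<gamma>) * e) \<le> (1 - \<gamma>) * e"
    using assms bern_prob_nonneg bern_prob_le_one[of \<gamma> f] by (intro mult_left_le_one_le) auto
  moreover have "(1 - bern_prob \<gamma> f) * f \<le> \<gamma>"
    using assms by (simp add: one_minus_bern_prob_mult)
  ultimately show ?thesis by linarith
qed

lemma nn_integral_randomized_evalue_le:
  assumes M: "prob_space M" and sub: "subalgebra M S" and \<gamma>: "0 \<le> \<gamma>" "\<gamma> \<le> 1"
    and F: "F \<in> borel_measurable S" and E: "E \<in> borel_measurable S"
    and F_nonneg: "\<And>\<omega>. \<omega> \<in> space M \<Longrightarrow> 0 \<le> F \<omega>"
    and E_nonneg: "\<And>\<omega>. \<omega> \<in> space M \<Longrightarrow> 0 \<le> E \<omega>"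
    and T: "T \<in> measurable M (count_space UNIV)"
    and T_cond: "is_cond_prob M S {\<omega> \<in> space M. T \<omega>} (\<lambda>\<omega>. bern_prob \<gamma> (F \<omega>))"
  shows "(\<integral>\<^sup>+\<omega>. ennreal (if T \<omega> then (1 - \<gamma>) * E \<omega> else F \<omega>) \<partial>M)
    \<le> ennreal \<gamma> + ennreal (1 - \<gamma>) * (\<integral>\<^sup>+\<omega>. ennreal (E \<omega>) \<partial>M)"
proof -
  interpret prob_space M by (rule M)
  define B where "B = {\<omega> \<in> space M. T \<omega>}"
  define p where "p \<omega> = bern_prob \<gamma> (F \<omega>)" for \<omega>
  have "B \<in> sets M" unfolding B_def using T by (rule predE)
  then have B: "B \<in> sets M" "space M - B \<in> sets M" by auto
  have FM: "F \<in> borel_measurable M" and EM: "E \<in> borel_measurable M"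
    using measurable_from_subalg[OF sub] F E by auto
  have p: "p \<in> borel_measurable S" "(\<lambda>\<omega>. 1 - p \<omega>) \<in> borel_measurable S"
    unfolding p_def using F by measurable
  have p_bounds: "0 \<le> p \<omega> \<and> p \<omega> \<le> 1" "0 \<le> 1 - p \<omega> \<and> 1 - p \<omega> \<le> 1" if "\<omega> \<in> space M" for \<omega>
    unfolding p_def using bern_prob_nonneg bern_prob_le_one \<gamma> F_nonneg[OF that] by auto
  have B_cond: "is_cond_prob M S B p" "is_cond_prob M S (space M - B) (\<lambda>\<omega>. 1 - p \<omega>)"
    using T_cond is_cond_prob_compl[OF M sub B(1) p(1)] p_bounds
    unfolding B_def p_def by auto
  have "(\<integral>\<^sup>+\<omega>. ennreal (if T \<omega> then (1 - \<gamma>) * E \<omega> else F \<omega>) \<partial>M)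
      = (\<integral>\<^sup>+\<omega>. indicator B \<omega> * ennreal ((1 - \<gamma>) * E \<omega>)
          + indicator (space M - B) \<omega> * ennreal (F \<omega>) \<partial>M)"
    by (intro nn_integral_cong) (auto simp: B_def indicator_def)
  also have "\<dots> = (\<integral>\<^sup>+\<omega>. indicator B \<omega> * ennreal ((1 - \<gamma>) * E \<omega>) \<partial>M)
      + (\<integral>\<^sup>+\<omega>. indicator (space M - B) \<omega> * ennreal (F \<omega>) \<partial>M)"
    using B FM EM by (intro nn_integral_add) auto
  also have "\<dots> = (\<integral>\<^sup>+\<omega>. ennreal (p \<omega>) * ennreal ((1 - \<gamma>) * E \<omega>) \<partial>M)
      + (\<integral>\<^sup>+\<omega>. ennreal (1 - p \<omega>) * ennreal (F \<omega>) \<partial>M)"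
    using nn_integral_indicator_mult_cond_prob[OF finite_measure_axioms sub B(1) p(1) p_bounds(1) B_cond(1)]
      nn_integral_indicator_mult_cond_prob[OF finite_measure_axioms sub B(2) p(2) p_bounds(2) B_cond(2)]
      E F by simp
  also have "\<dots> = (\<integral>\<^sup>+\<omega>. ennreal (p \<omega> * ((1 - \<gamma>) * E \<omega>) + (1 - p \<omega>) * F \<omega>) \<partial>M)"
    using FM EM p(1) measurable_from_subalg[OF sub p(1)] p_bounds E_nonneg F_nonneg \<gamma>
    by (subst nn_integral_add[symmetric]) (auto intro!: nn_integral_cong simp: ennreal_mult[symmetric] ennreal_plus)
  also have "\<dots> \<le> (\<integral>\<^sup>+\<omega>. ennreal (\<gamma> + (1 - \<gamma>) * E \<omega>) \<partial>M)"
    unfolding p_def using bern_prob_mixture_le \<gamma> E_nonneg F_nonneg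
    by (intro nn_integral_mono ennreal_leI) auto
  also have "\<dots> = ennreal \<gamma> + ennreal (1 - \<gamma>) * (\<integral>\<^sup>+\<omega>. ennreal (E \<omega>) \<partial>M)"
    using EM E_nonneg \<gamma>
    by (simp add: ennreal_plus ennreal_mult nn_integral_add nn_integral_cmult emeasure_space_1 cong: nn_integral_cong)
  finally show ?thesis .
qed

lemma nn_integral_randomized_evalue_le_one:
  assumes "prob_space M" "subalgebra M S" "0 \<le> \<gamma>" "\<gamma> \<le> 1"
    and "F \<in> borel_measurable S" "E \<in> borel_measurable S"
    and "\<And>\<omega>. \<omega> \<in> space M \<Longrightarrow> 0 \<le> F \<omega>" "\<And>\<omega>. \<omega> \<in> space M \<Longrightarrow> 0 \<le> E \<omega>"
    and "T \<in> measurable M (count_space UNIV)"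
    and "is_cond_prob M S {\<omega> \<in> space M. T \<omega>} (\<lambda>\<omega>. bern_prob \<gamma> (F \<omega>))"
    and E_evalue: "(\<integral>\<^sup>+\<omega>. ennreal (E \<omega>) \<partial>M) \<le> 1"
  shows "(\<integral>\<^sup>+\<omega>. ennreal (if T \<omega> then (1 - \<gamma>) * E \<omega> else F \<omega>) \<partial>M) \<le> 1"
proof -
  have "(\<integral>\<^sup>+\<omega>. ennreal (if T \<omega> then (1 - \<gamma>) * E \<omega> else F \<omega>) \<partial>M)
      \<le> ennreal \<gamma> + ennreal (1 - \<gamma>) * (\<integral>\<^sup>+\<omega>. ennreal (E \<omega>) \<partial>M)"
    using assms(1-10) by (rule nn_integral_randomized_evalue_le)
  also have "\<dots> \<le> ennreal \<gamma> + ennreal (1 - \<gamma>) * 1"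
    using E_evalue by (intro add_left_mono mult_left_mono) auto
  also have "\<dots> = 1" using assms(3,4) by (simp flip: ennreal_plus)
  finally show ?thesis .
qed

lemma space_FE_sigma [simp]: "space (FE_sigma M K F E) = space M"
  unfolding FE_sigma_def by (simp add: space_measure_of_conv)

lemma sets_FE_sigma:
  "sets (FE_sigma M K F E) = sigma_sets (space M)
     ({F j -` B \<inter> space M | j B. j < K \<and> B \<in> sets borel} \<union>
      {E j -` B \<inter> space M | j B. j < K \<and> B \<in> sets borel})"
  unfolding FE_sigma_def by (rule sets_measure_of) auto

lemma measurable_FE_sigma:
  assumes "j < K"
  shows "F j \<in> borel_measurable (FE_sigma M K F E)" "E j \<in> borel_measurable (FE_sigma M K F E)"
  using assms by (auto intro!: measurableI simp: sets_FE_sigma) (blast intro: sigma_sets.Basic)+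

lemma subalgebra_FE_sigma:
  assumes "\<And>j. j < K \<Longrightarrow> F j \<in> borel_measurable M" "\<And>j. j < K \<Longrightarrow> E j \<in> borel_measurable M"
  shows "subalgebra M (FE_sigma M K F E)"
  unfolding subalgebra_def sets_FE_sigma using assms
  by (auto intro!: sets.sigma_sets_subset measurable_sets)

lemma expectation_FDP_ebh_le:
  assumes M: "prob_space M" and N: "N \<subseteq> {..<K}" and \<alpha>: "0 < \<alpha>"
    and e: "\<And>i. i \<in> N \<Longrightarrow> e i \<in> borel_measurable M"
    and e_nonneg: "\<And>i \<omega>. i \<in> N \<Longrightarrow> \<omega> \<in> space M \<Longrightarrow> 0 \<le> e i \<omega>"
    and e_evalue: "\<And>i. i \<in> N \<Longrightarrow> (\<integral>\<^sup>+\<omega>. ennreal (e i \<omega>) \<partial>M) \<le> 1"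
  shows "prob_space.expectation M (\<lambda>\<omega>. FDP N (ebh K \<alpha> (\<lambda>i. e i \<omega>))) \<le> \<alpha> * real (card N) / real K"
proof -
  interpret prob_space M by (rule M)
  have finN: "finite N" using N by (rule finite_subset) simp
  have "(\<integral>\<^sup>+\<omega>. ennreal (FDP N (ebh K \<alpha> (\<lambda>i. e i \<omega>))) \<partial>M)
      \<le> (\<integral>\<^sup>+\<omega>. (\<Sum>i\<in>N. ennreal (\<alpha> / real K) * ennreal (e i \<omega>)) \<partial>M)"
  proof (rule nn_integral_mono)
    fix \<omega> assume \<omega>: "\<omega> \<in> space M"
    have "ennreal (FDP N (ebh K \<alpha> (\<lambda>i. e i \<omega>))) \<le> ennreal (\<Sum>i\<in>N. \<alpha> / real K * e i \<omega>)"
      using FDP_ebh_le[OF finN \<alpha>, of "\<lambda>i. e i \<omega>" K] e_nonneg[OF _ \<omega>] by (intro ennreal_leI) simp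
    also have "\<dots> = (\<Sum>i\<in>N. ennreal (\<alpha> / real K * e i \<omega>))"
      using \<alpha> e_nonneg[OF _ \<omega>] by (intro sum_ennreal[symmetric]) simp
    also have "\<dots> = (\<Sum>i\<in>N. ennreal (\<alpha> / real K) * ennreal (e i \<omega>))"
      using \<alpha> e_nonneg[OF _ \<omega>] by (intro sum.cong refl ennreal_mult) auto
    finally show "ennreal (FDP N (ebh K \<alpha> (\<lambda>i. e i \<omega>)))
        \<le> (\<Sum>i\<in>N. ennreal (\<alpha> / real K) * ennreal (e i \<omega>))" .
  qed
  also have "\<dots> = (\<Sum>i\<in>N. ennreal (\<alpha> / real K) * (\<integral>\<^sup>+\<omega>. ennreal (e i \<omega>) \<partial>M))"
    using finN e by (subst nn_integral_sum) (auto intro!: sum.cong nn_integral_cmult)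
  also have "\<dots> \<le> (\<Sum>i\<in>N. ennreal (\<alpha> / real K) * 1)"
    using e_evalue by (intro sum_mono mult_left_mono) auto
  also have "\<dots> = ennreal (\<alpha> * real (card N) / real K)"
    using \<alpha> by (simp add: ennreal_of_nat_eq_real_of_nat ennreal_mult[symmetric])
  finally show ?thesis
    using \<alpha> by (intro integral_real_bounded) auto
qed

theorem theorem2:
  fixes M :: "'a measure" and K :: nat and \<alpha> \<gamma> :: real
    and F E :: "nat \<Rightarrow> 'a \<Rightarrow> real" and T :: "nat \<Rightarrow> 'a \<Rightarrow> bool" and N :: "nat set"
  assumes "prob_space M"
    and "K \<ge> 1"
    and "0 < \<alpha>" "\<alpha> \<le> 1" and "0 < \<gamma>" "\<gamma> \<le> 1"
    and "N \<subseteq> {..<K}"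
    and "\<And>i. i < K \<Longrightarrow> F i \<in> borel_measurable M"
    and "\<And>i. i < K \<Longrightarrow> E i \<in> borel_measurable M"
    and "\<And>i \<omega>. i < K \<Longrightarrow> \<omega> \<in> space M \<Longrightarrow> F i \<omega> \<ge> 0"
    and "\<And>i \<omega>. i < K \<Longrightarrow> \<omega> \<in> space M \<Longrightarrow> E i \<omega> \<ge> 0"
    and "\<And>i. i \<in> N \<Longrightarrow> (\<integral>\<^sup>+ \<omega>. ennreal (E i \<omega>) \<partial>M) \<le> 1"
    and "\<And>i. i < K \<Longrightarrow> T i \<in> measurable M (count_space UNIV)"
    and "\<And>i A. i < K \<Longrightarrow> A \<in> sets (FE_sigma M K F E) \<Longrightarrow>
           measure M ({\<omega> \<in> space M. T i \<omega>} \<inter> A) =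
           (\<integral>\<omega>. indicator A \<omega> * bern_prob \<gamma> (F i \<omega>) \<partial>M)"
  shows "prob_space.expectation M (\<lambda>\<omega>.
           FDP N (ebh K \<alpha> (\<lambda>i. if T i \<omega> then (1 - \<gamma>) * E i \<omega> else F i \<omega>))) \<le> \<alpha>"
proof -
  note M = assms(1) and N = assms(7) and F = assms(8) and E = assms(9)
    and F_nonneg = assms(10) and E_nonneg = assms(11) and E_evalue = assms(12)
    and T = assms(13) and T_cond = assms(14)
  define E' where "E' i \<omega> = (if T i \<omega> then (1 - \<gamma>) * E i \<omega> else F i \<omega>)" for i \<omega>
  have sub: "subalgebra M (FE_sigma M K F E)" using F E by (rule subalgebra_FE_sigma)
  have E'_measurable: "E' i \<in> borel_measurable M" if "i < K" for i
    unfolding E'_def using F[OF that] E[OF that] T[OF that] by (intro measurable_If predE) auto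
  have E'_nonneg: "0 \<le> E' i \<omega>" if "i < K" "\<omega> \<in> space M" for i \<omega>
    unfolding E'_def using F_nonneg[OF that] E_nonneg[OF that] assms(6) by simp
  have E'_evalue: "(\<integral>\<^sup>+\<omega>. ennreal (E' i \<omega>) \<partial>M) \<le> 1" if i: "i \<in> N" for i
    using i N assms(5,6) F_nonneg E_nonneg T T_cond E_evalue[OF i] unfolding E'_def
    by (intro nn_integral_randomized_evalue_le_one[OF M sub] measurable_FE_sigma)
      (auto simp: is_cond_prob_def)
  have "prob_space.expectation M (\<lambda>\<omega>. FDP N (ebh K \<alpha> (\<lambda>i. E' i \<omega>)))
      \<le> \<alpha> * real (card N) / real K"
    using N assms(3) E'_measurable E'_nonneg E'_evalue by (intro expectation_FDP_ebh_le[OF M]) auto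
  also have "\<dots> \<le> \<alpha>"
    using card_mono[OF _ N] assms(2,3) by (simp add: field_simps)
  finally show ?thesis unfolding E'_def .
qed

end
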